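(* Let $G$ be an unweighted graph (loops allowed) and let $F$ be a bipartite graph on vertices $v_1,\dots,v_m$. Let $H$ be an $\mathcal{H}$-blow-up of $F$ with blown-up graphs $H_1,\dots,H_m$, where $\mathcal{H}$ is the class of graphs that are cross-bipartite swapping in $G$. Then for every $U\subseteq V(F)$ and every $u\in V(F)\setminus U$, \[ \hom(H^{U},G)\le\hom(H^{U\cup\{u\}},G). \]
   Context: $\hom(\cdot,G)$ counts homomorphisms into $G$. The tensor product $H'\times K_2$ has vertex set $V(H')\times\{1,2\}$, with $(x,i)\sim(y,j)$ iff $xy\in E(H')$ and $i\ne j$. For $A,B\subseteq V(G)$, $\hom_{\mathrm b}(H'\times K_2,G[A,B])$ counts homomorphisms $H'\times K_2\to G$ mapping $V(H')\times\{1\}$ into $A$ and $V(H')\times\{2\}$ into $B$; $H'$ is cross-bipartite swapping in $G$ if $\hom(H',G[A])\hom(H',G[B])\le\hom_{\mathrm b}(H'\times K_2,G[A,B])$ for all $A,B\subseteq V(G)$. The $\mathcal{H}$-blow-up $H$ of $F$ is the disjoint union of $H_1,\dots,H_m\in\mathcal{H}$ (on vertex sets $V_1,\dots,V_m$) with all edges between $V_i$ and $V_j$ added whenever $v_iv_j\in E(F)$. For $U\subseteq V(F)$, the graph $H^{U}$ is defined as follows: take two vertex-disjoint copies of $H$, on $\bigsqcup_i W_i$ and $\bigsqcup_i W_i'$, where $W_i,W_i'$ are copies of $V_i$; then for each $j$ with $v_j\in U$, delete all edges inside $W_j$ and inside $W_j'$ and instead join the copy $w\in W_j$ of $x\in V_j$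 to the copy $w'\in W_j'$ of $y\in V_j$ whenever $xy\in E(H_j)$ (so the graph on $W_j\sqcup W_j'$ becomes $H_j\times K_2$ instead of $H_j\sqcup H_j$). All other edges are as in the two copies of $H$. *)

theory Defs
  imports "HOL-Library.FuncSet"
begin

definition graph :: "'a set \<Rightarrow> ('a \<times> 'a) set \<Rightarrow> bool" where
  "graph V E \<longleftrightarrow> finite V \<and> E \<subseteq> V \<times> V \<and> sym E"

definition loopless :: "('a \<times> 'a) set \<Rightarrow> bool" where
  "loopless E \<longleftrightarrow> (\<forall>x. (x, x) \<notin> E)"

definition hom_count :: "'a set \<Rightarrow> ('a \<times> 'a) set \<Rightarrow> 'b set \<Rightarrow> ('b \<times> 'b) set \<Rightarrow> nat" where
  "hom_count VH EH VG EG =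
     card {f \<in> VH \<rightarrow>\<^sub>E VG. \<forall>(x, y) \<in> EH. (f x, f y) \<in> EG}"

definition induced_edges :: "('b \<times> 'b) set \<Rightarrow> 'b set \<Rightarrow> ('b \<times> 'b) set" where
  "induced_edges EG A = EG \<inter> (A \<times> A)"

text \<open>Tensor product H' \<times> K2: vertex set V(H') \<times> {True, False} (True = 1, False = 2).\<close>
definition tensorK2_vertices :: "'a set \<Rightarrow> ('a \<times> bool) set" where
  "tensorK2_vertices VH = VH \<times> UNIV"

definition tensorK2_edges :: "('a \<times> 'a) set \<Rightarrow> (('a \<times> bool) \<times> ('a \<times> bool)) set" where
  "tensorK2_edges EH = {((x, i), (y, j)). (x, y) \<in> EH \<and> i \<noteq> j}"

definition hom_b :: "'a set \<Rightarrow> ('a \<times> 'a) set \<Rightarrow> ('b \<times> 'b) set \<Rightarrow> 'b set \<Rightarrow> 'b set \<Rightarrow> nat" where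
  "hom_b VH EH EG A B =
     card {f \<in> tensorK2_vertices VH \<rightarrow>\<^sub>E (A \<union> B).
             (\<forall>(p, q) \<in> tensorK2_edges EH. (f p, f q) \<in> EG) \<and>
             (\<forall>x \<in> VH. f (x, True) \<in> A \<and> f (x, False) \<in> B)}"

definition cross_bipartite_swapping ::
  "'a set \<Rightarrow> ('a \<times> 'a) set \<Rightarrow> 'b set \<Rightarrow> ('b \<times> 'b) set \<Rightarrow> bool" where
  "cross_bipartite_swapping VH EH VG EG \<longleftrightarrow>
     (\<forall>A B. A \<subseteq> VG \<longrightarrow> B \<subseteq> VG \<longrightarrow>
        hom_count VH EH A (induced_edges EG A) * hom_count VH EH B (induced_edges EG B)
          \<le> hom_b VH EH EG A B)"

text \<open>F is a graph on vertices 0..m-1 (standing for v_1,...,v_m); bipartite.\<close>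
definition bipartite :: "'a set \<Rightarrow> ('a \<times> 'a) set \<Rightarrow> bool" where
  "bipartite V E \<longleftrightarrow> (\<exists>S \<subseteq> V. \<forall>(x, y) \<in> E. (x \<in> S \<longleftrightarrow> y \<notin> S))"

definition blowup_vertices :: "nat \<Rightarrow> (nat \<Rightarrow> 'v set) \<Rightarrow> (nat \<times> 'v) set" where
  "blowup_vertices m VH = {(i, x). i < m \<and> x \<in> VH i}"

definition blowup_edges ::
  "nat \<Rightarrow> (nat \<times> nat) set \<Rightarrow> (nat \<Rightarrow> 'v set) \<Rightarrow> (nat \<Rightarrow> ('v \<times> 'v) set) \<Rightarrow> ((nat \<times> 'v) \<times> (nat \<times> 'v)) set" where
  "blowup_edges m EF VH EH =
     {((i, x), (j, y)). i < m \<and> j < m \<and> x \<in> VH i \<and> y \<in> VH j \<and>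
        ((i = j \<and> (x, y) \<in> EH i) \<or> (i, j) \<in> EF)}"

text \<open>The graph H^U: two copies of H (copy flag c :: bool, vertex (c, i, x) is the copy
of (i, x) in W_i if c = True, in W_i' if c = False).\<close>
definition HU_vertices :: "nat \<Rightarrow> (nat \<Rightarrow> 'v set) \<Rightarrow> (bool \<times> nat \<times> 'v) set" where
  "HU_vertices m VH = UNIV \<times> blowup_vertices m VH"

definition HU_edges ::
  "nat \<Rightarrow> (nat \<times> nat) set \<Rightarrow> (nat \<Rightarrow> 'v set) \<Rightarrow> (nat \<Rightarrow> ('v \<times> 'v) set) \<Rightarrow> nat set
     \<Rightarrow> ((bool \<times> nat \<times> 'v) \<times> (bool \<times> nat \<times> 'v)) set" where
  "HU_edges m EF VH EH U =
     {((c, i, x), (d, j, y)).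
        (c = d \<and> ((i, x), (j, y)) \<in> blowup_edges m EF VH EH \<and> \<not> (i = j \<and> i \<in> U))
      \<or> (c \<noteq> d \<and> i = j \<and> i \<in> U \<and> i < m \<and> x \<in> VH i \<and> y \<in> VH i \<and> (x, y) \<in> EH i)}"

end

theory Submission
  imports Defs
begin

(* Fix the images g of all vertices of H^U outside W_u and W_u'. Since F is loopless, the
   remaining vertices meet the fixed ones only through blow-up edges inside their own copy,
   which confine the images of copy c to the common neighbourhood A_c of the fixed images;
   among themselves they carry two disjoint copies of H_u in H^U and H_u \<times> K_2 in
   H^(U \<union> {u}). So, once g respects the edges among the fixed vertices, g has
   hom(H_u, G[A_1]) hom(H_u, G[A_2]) extensions for U and hom_b(H_u \<times> K_2, G[A_1, A_2])
   extensions for U \<union> {u}, and the swapping property of H_u compares them fibre by fibre. *)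

lemma card_PiE_override_split:
  assumes fin: "finite V" "finite Y" and RV: "R \<subseteq> V"
  shows "card {f \<in> V \<rightarrow>\<^sub>E Y. P f} =
    (\<Sum>g\<in>R \<rightarrow>\<^sub>E Y. card {h \<in> (V - R) \<rightarrow>\<^sub>E Y. P (override_on h g R)})"
    (is "card ?L = (\<Sum>g\<in>_. card (?fibre g))")
proof -
  have "bij_betw (\<lambda>f. (restrict f R, restrict f (V - R))) ?L (SIGMA g:R \<rightarrow>\<^sub>E Y. ?fibre g)"
  proof (rule bij_betw_byWitness[where f' = "\<lambda>(g, h). override_on h g R"])
    have glue: "override_on (restrict f (V - R)) (restrict f R) R = f" if "f \<in> V \<rightarrow>\<^sub>E Y" for f
      using that RV by (auto simp: override_on_def fun_eq_iff PiE_def extensional_def)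
    then show "\<forall>f\<in>?L. (\<lambda>(g, h). override_on h g R) (restrict f R, restrict f (V - R)) = f"
      by auto
    show "(\<lambda>f. (restrict f R, restrict f (V - R))) ` ?L \<subseteq> (SIGMA g:R \<rightarrow>\<^sub>E Y. ?fibre g)"
      using glue RV by auto
  qed (use RV in \<open>auto simp: override_on_def fun_eq_iff PiE_def extensional_def Pi_def\<close>)
  then have "card ?L = card (SIGMA g:R \<rightarrow>\<^sub>E Y. ?fibre g)"
    by (rule bij_betw_same_card)
  also have "\<dots> = (\<Sum>g\<in>R \<rightarrow>\<^sub>E Y. card (?fibre g))"
  proof (intro card_SigmaI ballI)
    show "finite (R \<rightarrow>\<^sub>E Y)"
      using fin RV by (auto intro!: finite_PiE dest: finite_subset)
    have "finite ((V - R) \<rightarrow>\<^sub>E Y)"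
      using fin by (auto intro!: finite_PiE)
    then show "finite (?fibre g)" for g
      by simp
  qed
  finally show ?thesis .
qed

lemma card_homs_two_copies:
  assumes EH: "EH \<subseteq> VH \<times> VH" and A: "\<And>c. A c \<subseteq> Y"
  shows "card {\<phi> \<in> VH \<times> UNIV \<rightarrow>\<^sub>E Y. (\<forall>x\<in>VH. \<forall>c. \<phi> (x, c) \<in> A c)
              \<and> (\<forall>(x, y)\<in>EH. \<forall>c. (\<phi> (x, c), \<phi> (y, c)) \<in> EG)}
       = hom_count VH EH (A True) (induced_edges EG (A True))
         * hom_count VH EH (A False) (induced_edges EG (A False))"
    (is "card ?S = _")
proof -
  let ?C = "\<lambda>c. {\<psi> \<in> VH \<rightarrow>\<^sub>E A c. \<forall>(x, y)\<in>EH. (\<psi> x, \<psi> y) \<in> induced_edges EG (A c)}"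
  let ?split = "\<lambda>\<phi>. (\<lambda>x\<in>VH. \<phi> (x, True), \<lambda>x\<in>VH. \<phi> (x, False))"
  let ?join = "\<lambda>(a, b). restrict (\<lambda>(x, c). if c then a x else b x) (VH \<times> UNIV)"
  have "bij_betw ?split ?S (?C True \<times> ?C False)"
  proof (rule bij_betw_byWitness[where f' = ?join])
    show "\<forall>\<phi>\<in>?S. ?join (?split \<phi>) = \<phi>"
      by (auto simp: fun_eq_iff PiE_def extensional_def)
    show "\<forall>ab\<in>?C True \<times> ?C False. ?split (?join ab) = ab"
      by (auto simp: fun_eq_iff PiE_def extensional_def)
    have "(\<lambda>x\<in>VH. \<phi> (x, c)) \<in> ?C c" if "\<phi> \<in> ?S" for \<phi> c
      using that EH by (fastforce simp: induced_edges_def)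
    then show "?split ` ?S \<subseteq> ?C True \<times> ?C False"
      by blast
    show "?join ` (?C True \<times> ?C False) \<subseteq> ?S"
      using EH A by (auto simp: induced_edges_def all_bool_eq PiE_iff; blast)
  qed
  then have "card ?S = card (?C True \<times> ?C False)"
    by (rule bij_betw_same_card)
  then show ?thesis
    by (simp add: card_cartesian_product hom_count_def)
qed

lemma hom_b_eq_card:
  assumes "\<And>c. A c \<subseteq> Y"
  shows "hom_b VH EH EG (A True) (A False)
       = card {\<phi> \<in> VH \<times> UNIV \<rightarrow>\<^sub>E Y. (\<forall>x\<in>VH. \<forall>c. \<phi> (x, c) \<in> A c)
              \<and> (\<forall>(x, y)\<in>EH. \<forall>c. (\<phi> (x, c), \<phi> (y, \<not> c)) \<in> EG)}"
  unfolding hom_b_def tensorK2_vertices_def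
  using assms by (intro arg_cong[where f = card]) (auto simp: tensorK2_edges_def PiE_iff all_bool_eq; blast)

lemma HU_edges_iff:
  "((c, i, x), (d, j, y)) \<in> HU_edges m EF VH EH U \<longleftrightarrow>
    (c = d \<and> i < m \<and> j < m \<and> x \<in> VH i \<and> y \<in> VH j
       \<and> ((i = j \<and> (x, y) \<in> EH i) \<or> (i, j) \<in> EF) \<and> \<not> (i = j \<and> i \<in> U))
    \<or> (c \<noteq> d \<and> i = j \<and> i \<in> U \<and> i < m \<and> x \<in> VH i \<and> y \<in> VH i \<and> (x, y) \<in> EH i)"
  by (simp add: HU_edges_def blowup_edges_def)

locale blowup_blob =
  fixes VG :: "'g set" and EG :: "('g \<times> 'g) set"
    and m :: nat and EF :: "(nat \<times> nat) set"
    and VH :: "nat \<Rightarrow> 'v set" and EH :: "nat \<Rightarrow> ('v \<times> 'v) set"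
    and u :: nat
  assumes G: "graph VG EG"
    and F: "graph {..<m} EF" "loopless EF"
    and H: "\<forall>i<m. graph (VH i) (EH i)"
    and u: "u < m"
begin

lemma sym_EG: "sym EG" and sym_EF: "sym EF" and EH_u: "EH u \<subseteq> VH u \<times> VH u"
  using G F H u by (simp_all add: graph_def)

lemma EF_neq: "(u, j) \<in> EF \<Longrightarrow> j \<noteq> u"
  using F(2) by (auto simp: loopless_def)

definition rest :: "(bool \<times> nat \<times> 'v) set" where
  "rest = {v \<in> HU_vertices m VH. fst (snd v) \<noteq> u}"

definition blob :: "(bool \<times> nat \<times> 'v) set" where
  "blob = UNIV \<times> {u} \<times> VH u"

lemma rest_iff [simp]: "(c, j, y) \<in> rest \<longleftrightarrow> j < m \<and> y \<in> VH j \<and> j \<noteq> u"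
  by (simp add: rest_def HU_vertices_def blowup_vertices_def)

lemma HU_vertices_minus_rest: "HU_vertices m VH - rest = blob"
  using u by (auto simp: rest_def blob_def HU_vertices_def blowup_vertices_def)

lemma finite_HU_vertices: "finite (HU_vertices m VH)"
proof -
  have "blowup_vertices m VH = Sigma {..<m} VH"
    by (auto simp: blowup_vertices_def)
  moreover have "finite (Sigma {..<m} VH)"
    using H by (intro finite_SigmaI) (auto simp: graph_def)
  ultimately show ?thesis
    by (simp add: HU_vertices_def)
qed

definition lift :: "('v \<times> bool \<Rightarrow> 'g) \<Rightarrow> bool \<times> nat \<times> 'v \<Rightarrow> 'g" where
  "lift \<phi> = (\<lambda>(c, i, x). if i = u \<and> x \<in> VH u then \<phi> (x, c) else undefined)"

lemma bij_betw_lift: "bij_betw lift (VH u \<times> UNIV \<rightarrow>\<^sub>E Y) (blob \<rightarrow>\<^sub>E Y)"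
  by (rule bij_betw_byWitness[where f' = "\<lambda>h. restrict (\<lambda>(x, c). h (c, u, x)) (VH u \<times> UNIV)"])
    (auto simp: lift_def blob_def PiE_def extensional_def fun_eq_iff)

lemma lift_apply [simp]: "x \<in> VH u \<Longrightarrow> lift \<phi> (c, u, x) = \<phi> (x, c)"
  by (simp add: lift_def)

definition common_nbhd :: "(bool \<times> nat \<times> 'v \<Rightarrow> 'g) \<Rightarrow> bool \<Rightarrow> 'g set" where
  "common_nbhd g c = {a \<in> VG. \<forall>j<m. \<forall>y\<in>VH j. (u, j) \<in> EF \<longrightarrow> (a, g (c, j, y)) \<in> EG}"

lemma common_nbhd_subset: "common_nbhd g c \<subseteq> VG"
  by (auto simp: common_nbhd_def)

definition hom_on_rest :: "nat set \<Rightarrow> (bool \<times> nat \<times> 'v \<Rightarrow> 'g) \<Rightarrow> bool" where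
  "hom_on_rest U g \<longleftrightarrow>
     (\<forall>(p, q) \<in> HU_edges m EF VH EH U. p \<in> rest \<longrightarrow> q \<in> rest \<longrightarrow> (g p, g q) \<in> EG)"

lemma HU_edges_insert_rest:
  assumes "p \<in> rest" "q \<in> rest"
  shows "(p, q) \<in> HU_edges m EF VH EH (insert u U) \<longleftrightarrow> (p, q) \<in> HU_edges m EF VH EH U"
  using assms by (cases p, cases q) (auto simp: HU_edges_iff)

lemma hom_on_rest_insert: "hom_on_rest (insert u U) g = hom_on_rest U g"
  unfolding hom_on_rest_def using HU_edges_insert_rest by blast

definition HU_hom :: "nat set \<Rightarrow> (bool \<times> nat \<times> 'v \<Rightarrow> 'g) \<Rightarrow> bool" where
  "HU_hom U f \<longleftrightarrow> (\<forall>(p, q) \<in> HU_edges m EF VH EH U. (f p, f q) \<in> EG)"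

lemma HU_homD: "HU_hom U f \<Longrightarrow> (p, q) \<in> HU_edges m EF VH EH U \<Longrightarrow> (f p, f q) \<in> EG"
  by (auto simp: HU_hom_def)

lemma HU_hom_override_liftD:
  assumes \<phi>: "\<phi> \<in> VH u \<times> UNIV \<rightarrow>\<^sub>E VG" and hom: "HU_hom U (override_on (lift \<phi>) g rest)"
  shows "hom_on_rest U g" and "\<forall>x\<in>VH u. \<forall>c. \<phi> (x, c) \<in> common_nbhd g c"
    and "\<forall>(x, y)\<in>EH u. \<forall>c. (\<phi> (x, c), \<phi> (y, if u \<in> U then \<not> c else c)) \<in> EG"
proof -
  show "hom_on_rest U g"
    using hom by (fastforce simp: HU_hom_def hom_on_rest_def)
  show "\<forall>x\<in>VH u. \<forall>c. \<phi> (x, c) \<in> common_nbhd g c"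
  proof (intro ballI allI)
    fix x c assume x: "x \<in> VH u"
    have "(\<phi> (x, c), g (c, j, y)) \<in> EG" if "j < m" "y \<in> VH j" "(u, j) \<in> EF" for j y
    proof -
      have "((c, u, x), (c, j, y)) \<in> HU_edges m EF VH EH U"
        using that x u EF_neq[OF that(3)] by (simp add: HU_edges_iff)
      then show ?thesis
        using HU_homD[OF hom] x that EF_neq[OF that(3)] by fastforce
    qed
    moreover have "\<phi> (x, c) \<in> VG"
      using \<phi> x by auto
    ultimately show "\<phi> (x, c) \<in> common_nbhd g c"
      by (simp add: common_nbhd_def)
  qed
  have "((c, u, x), (if u \<in> U then \<not> c else c, u, y)) \<in> HU_edges m EF VH EH U"
    if "(x, y) \<in> EH u" for c x y
    using that EH_u u by (auto simp: HU_edges_iff)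
  then show "\<forall>(x, y)\<in>EH u. \<forall>c. (\<phi> (x, c), \<phi> (y, if u \<in> U then \<not> c else c)) \<in> EG"
    using hom EH_u by (fastforce simp: HU_hom_def)
qed

lemma HU_hom_override_liftI:
  assumes rest: "hom_on_rest U g" and nbhd: "\<forall>x\<in>VH u. \<forall>c. \<phi> (x, c) \<in> common_nbhd g c"
    and inner: "\<forall>(x, y)\<in>EH u. \<forall>c. (\<phi> (x, c), \<phi> (y, if u \<in> U then \<not> c else c)) \<in> EG"
  shows "HU_hom U (override_on (lift \<phi>) g rest)"
  unfolding HU_hom_def
proof (intro ballI, clarify)
  let ?f = "override_on (lift \<phi>) g rest"
  fix c i x d j y assume e: "((c, i, x), (d, j, y)) \<in> HU_edges m EF VH EH U"
  then have ij: "i < m" "j < m" "x \<in> VH i" "y \<in> VH j"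
    by (auto simp: HU_edges_iff)
  consider "i \<noteq> u" "j \<noteq> u" | "i = u" "j \<noteq> u" | "i \<noteq> u" "j = u" | "i = u" "j = u"
    by blast
  then show "(?f (c, i, x), ?f (d, j, y)) \<in> EG"
  proof cases
    case 1
    then show ?thesis
      using rest e ij by (force simp: hom_on_rest_def)
  next
    case 2
    then have "c = d" "(u, j) \<in> EF"
      using e by (auto simp: HU_edges_iff)
    then show ?thesis
      using nbhd ij 2 by (auto simp: common_nbhd_def)
  next
    case 3
    then have "c = d" "(u, i) \<in> EF"
      using e sym_EF by (auto simp: HU_edges_iff dest: symD)
    then have "(?f (d, j, y), ?f (c, i, x)) \<in> EG"
      using nbhd ij 3 by (auto simp: common_nbhd_def)
    then show ?thesis
      using sym_EG by (rule symD[rotated])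
  next
    case 4
    then have "(x, y) \<in> EH u" "d = (if u \<in> U then \<not> c else c)"
      using e EF_neq by (auto simp: HU_edges_iff)
    then have "(\<phi> (x, c), \<phi> (y, d)) \<in> EG"
      using inner by blast
    then show ?thesis
      using ij 4 by simp
  qed
qed

text \<open>The conditional copy index encodes the edges inside the blob: two copies of \<open>H_u\<close>
  if \<open>u \<notin> U\<close>, and \<open>H_u \<times> K_2\<close> if \<open>u \<in> U\<close>.\<close>
lemma HU_hom_override_lift_iff:
  assumes "\<phi> \<in> VH u \<times> UNIV \<rightarrow>\<^sub>E VG"
  shows "HU_hom U (override_on (lift \<phi>) g rest) \<longleftrightarrow> hom_on_rest U g
     \<and> (\<forall>x\<in>VH u. \<forall>c. \<phi> (x, c) \<in> common_nbhd g c)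
     \<and> (\<forall>(x, y)\<in>EH u. \<forall>c. (\<phi> (x, c), \<phi> (y, if u \<in> U then \<not> c else c)) \<in> EG)"
  using HU_hom_override_liftD[OF assms] HU_hom_override_liftI by blast

definition extensions :: "nat set \<Rightarrow> (bool \<times> nat \<times> 'v \<Rightarrow> 'g) \<Rightarrow> (bool \<times> nat \<times> 'v \<Rightarrow> 'g) set" where
  "extensions U g = {h \<in> blob \<rightarrow>\<^sub>E VG. HU_hom U (override_on h g rest)}"

lemma card_extensions:
  "card (extensions U g) = card {\<phi> \<in> VH u \<times> UNIV \<rightarrow>\<^sub>E VG. hom_on_rest U g
     \<and> (\<forall>x\<in>VH u. \<forall>c. \<phi> (x, c) \<in> common_nbhd g c)
     \<and> (\<forall>(x, y)\<in>EH u. \<forall>c. (\<phi> (x, c), \<phi> (y, if u \<in> U then \<not> c else c)) \<in> EG)}"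
proof -
  have "bij_betw lift {\<phi> \<in> VH u \<times> UNIV \<rightarrow>\<^sub>E VG. hom_on_rest U g
     \<and> (\<forall>x\<in>VH u. \<forall>c. \<phi> (x, c) \<in> common_nbhd g c)
     \<and> (\<forall>(x, y)\<in>EH u. \<forall>c. (\<phi> (x, c), \<phi> (y, if u \<in> U then \<not> c else c)) \<in> EG)}
    (extensions U g)"
    unfolding extensions_def
    by (intro bij_betw_Collect[OF bij_betw_lift]) (simp add: HU_hom_override_lift_iff)
  then show ?thesis
    by (simp add: bij_betw_same_card)
qed

lemma card_extensions_mono:
  assumes swap: "cross_bipartite_swapping (VH u) (EH u) VG EG" and "u \<notin> U"
  shows "card (extensions U g) \<le> card (extensions (insert u U) g)"
proof (cases "hom_on_rest U g")
  case False
  then show ?thesis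
    by (simp add: card_extensions)
next
  case True
  have "card (extensions U g) = card {\<phi> \<in> VH u \<times> UNIV \<rightarrow>\<^sub>E VG.
      (\<forall>x\<in>VH u. \<forall>c. \<phi> (x, c) \<in> common_nbhd g c) \<and> (\<forall>(x, y)\<in>EH u. \<forall>c. (\<phi> (x, c), \<phi> (y, c)) \<in> EG)}"
    using True \<open>u \<notin> U\<close> by (simp add: card_extensions)
  also have "\<dots> = hom_count (VH u) (EH u) (common_nbhd g True) (induced_edges EG (common_nbhd g True))
      * hom_count (VH u) (EH u) (common_nbhd g False) (induced_edges EG (common_nbhd g False))"
    by (rule card_homs_two_copies[OF EH_u common_nbhd_subset])
  also have "\<dots> \<le> hom_b (VH u) (EH u) EG (common_nbhd g True) (common_nbhd g False)"
    using swap common_nbhd_subset by (simp add: cross_bipartite_swapping_def)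
  also have "\<dots> = card {\<phi> \<in> VH u \<times> UNIV \<rightarrow>\<^sub>E VG.
      (\<forall>x\<in>VH u. \<forall>c. \<phi> (x, c) \<in> common_nbhd g c) \<and> (\<forall>(x, y)\<in>EH u. \<forall>c. (\<phi> (x, c), \<phi> (y, \<not> c)) \<in> EG)}"
    by (rule hom_b_eq_card[OF common_nbhd_subset])
  also have "\<dots> = card (extensions (insert u U) g)"
    using True by (simp add: card_extensions hom_on_rest_insert)
  finally show ?thesis .
qed

end

theorem lemma5p2:
  fixes VG :: "'g set" and EG :: "('g \<times> 'g) set"
    and m :: nat and EF :: "(nat \<times> nat) set"
    and VH :: "nat \<Rightarrow> 'v set" and EH :: "nat \<Rightarrow> ('v \<times> 'v) set"
    and U :: "nat set" and u :: nat
  assumes G: "graph VG EG"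
    and F: "graph {..<m} EF" "loopless EF" "bipartite {..<m} EF"
    and Hgraphs: "\<forall>i<m. graph (VH i) (EH i)"
    and Hswap: "\<forall>i<m. cross_bipartite_swapping (VH i) (EH i) VG EG"
    and U: "U \<subseteq> {..<m}"
    and u: "u < m" "u \<notin> U"
  shows "hom_count (HU_vertices m VH) (HU_edges m EF VH EH U) VG EG
           \<le> hom_count (HU_vertices m VH) (HU_edges m EF VH EH (insert u U)) VG EG"
proof -
  interpret blowup_blob VG EG m EF VH EH u
    using G F(1,2) Hgraphs u(1) by unfold_locales
  have split: "hom_count (HU_vertices m VH) (HU_edges m EF VH EH U') VG EG
      = (\<Sum>g\<in>rest \<rightarrow>\<^sub>E VG. card (extensions U' g))" for U'
    unfolding hom_count_def extensions_def HU_hom_def[symmetric] HU_vertices_minus_rest[symmetric]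
    using finite_HU_vertices G by (intro card_PiE_override_split) (auto simp: graph_def rest_def)
  show ?thesis
    unfolding split using Hswap \<open>u < m\<close> \<open>u \<notin> U\<close> by (intro sum_mono card_extensions_mono) auto
qed

end
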